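(* Let $\mathbb{F}$ be a field of characteristic zero, $n\ge1$, $B\in\mathbb{F}^{n\times n}$ symmetric, and let $G=G(\mathbf 1,B)$ with twin-reduced graph $G'=G(a',B')$. Then $\Gamma(\mathbf 1,B)$ acts transitively on $G$ if and only if $\Gamma(a',B')$ acts transitively on $G'$; and $\Gamma(\mathbf 1,B)$ acts generously transitively on $G$ if and only if $\Gamma(a',B')$ acts generously transitively on $G'$.
   Context: $G(a,B)$ denotes the weighted graph on vertex set $[n]$ with vertex weights $a_i$ and edge weights $B_{i,j}$; $\mathbf 1$ is the all-ones vector. Vertices $i,j$ are twins if rows $i$ and $j$ of $B$ are equal; let $C_1,\dots,C_m$ be the twin equivalence classes. The twin-reduced graph $G(a',B')$ has vertex set $[m]$, vertex weights $a'_i=\sum_{j\in C_i}a_j$ (here $=|C_i|$), and $B'$ is obtained from $B$ by deleting, for each $i$, all but one of the rows and columns indexed by $C_i$. $\Gamma(a,B)$ is the group of permutations $\gamma$ of the vertex set with $a_{\gamma(i)}=a_i$ and $B_{\gamma(i),\gamma(j)}=B_{i,j}$ for all $i,j$. A permutation group $\Gamma$ acts generously transitively if for all vertices $u,v$ there is $\gamma\in\Gamma$ with $\gamma(u)=v$ and $\gamma(v)=u$. *)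

theory Defs
  imports "HOL-Analysis.Analysis" "HOL-Combinatorics.Permutations"
begin

text \<open>A weighted graph G(a,B) on vertex set [n] = {0..<n}: vertex weights a i,
 edge weights B i j (entries of the field), only the values for i, j < n matter.\<close>

definition Gamma :: "nat \<Rightarrow> (nat \<Rightarrow> 'a) \<Rightarrow> (nat \<Rightarrow> nat \<Rightarrow> 'a) \<Rightarrow> (nat \<Rightarrow> nat) set" where
  "Gamma n a B = {\<gamma>. \<gamma> permutes {0..<n} \<and> (\<forall>i<n. a (\<gamma> i) = a i) \<and>
                      (\<forall>i<n. \<forall>j<n. B (\<gamma> i) (\<gamma> j) = B i j)}"

definition acts_transitively :: "nat \<Rightarrow> (nat \<Rightarrow> nat) set \<Rightarrow> bool" where
  "acts_transitively n \<Gamma> \<longleftrightarrow> (\<forall>u<n. \<forall>v<n. \<exists>\<gamma>\<in>\<Gamma>. \<gamma> u = v)"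

definition acts_generously_transitively :: "nat \<Rightarrow> (nat \<Rightarrow> nat) set \<Rightarrow> bool" where
  "acts_generously_transitively n \<Gamma> \<longleftrightarrow>
     (\<forall>u<n. \<forall>v<n. \<exists>\<gamma>\<in>\<Gamma>. \<gamma> u = v \<and> \<gamma> v = u)"

definition twins :: "nat \<Rightarrow> (nat \<Rightarrow> nat \<Rightarrow> 'a) \<Rightarrow> nat \<Rightarrow> nat \<Rightarrow> bool" where
  "twins n B i j \<longleftrightarrow> (\<forall>k<n. B i k = B j k)"

definition twin_class :: "nat \<Rightarrow> (nat \<Rightarrow> nat \<Rightarrow> 'a) \<Rightarrow> nat \<Rightarrow> nat set" where
  "twin_class n B i = {j. j < n \<and> twins n B i j}"

definition twin_classes :: "nat \<Rightarrow> (nat \<Rightarrow> nat \<Rightarrow> 'a) \<Rightarrow> nat set set" where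
  "twin_classes n B = twin_class n B ` {0..<n}"

definition twin_reduced :: "nat \<Rightarrow> (nat \<Rightarrow> nat \<Rightarrow> 'a::semiring_1) \<Rightarrow> nat \<Rightarrow> (nat \<Rightarrow> 'a)
                            \<Rightarrow> (nat \<Rightarrow> nat \<Rightarrow> 'a) \<Rightarrow> bool" where
  "twin_reduced n B m a' B' \<longleftrightarrow>
     (\<exists>C r. bij_betw C {0..<m} (twin_classes n B) \<and> (\<forall>i<m. r i \<in> C i) \<and>
            (\<forall>i<m. a' i = of_nat (card (C i))) \<and>
            (\<forall>i<m. \<forall>j<m. B' i j = B (r i) (r j)))"

end

theory Submission
  imports Defs
begin

text \<open>Twins can be interchanged by a transposition, which is an automorphism of \<open>G(\<one>,B)\<close>.
  Every automorphism of \<open>G(\<one>,B)\<close> permutes the twin classes and so descends to an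
  automorphism of the twin-reduced graph; conversely, an automorphism of \<open>G(a',B')\<close> maps
  each class onto a class of the same size \<open>a'\<^sub>i = |C\<^sub>i|\<close>, and gluing bijections between
  these classes lifts it to \<open>G(\<one>,B)\<close>. Orbit questions upstairs therefore reduce to orbit
  questions downstairs, up to correcting the lifted automorphism by transpositions of twins.\<close>

lemma Gamma_less: "\<gamma> \<in> Gamma n a B \<Longrightarrow> i < n \<Longrightarrow> \<gamma> i < n"
  unfolding Gamma_def using permutes_in_image by fastforce

lemma Gamma_comp:
  assumes "\<gamma> \<in> Gamma n a B" and "\<delta> \<in> Gamma n a B"
  shows "\<gamma> \<circ> \<delta> \<in> Gamma n a B"
  using assms Gamma_less[OF assms(2)] permutes_compose unfolding Gamma_def by fastforce

lemma twin_class_eq_iff: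
  assumes "x < n"
  shows "twin_class n B x = twin_class n B y \<longleftrightarrow> twins n B x y"
proof
  assume eq: "twin_class n B x = twin_class n B y"
  have "x \<in> twin_class n B x"
    using assms by (simp add: twin_class_def twins_def)
  then have "x \<in> twin_class n B y"
    by (simp add: eq)
  then show "twins n B x y"
    by (simp add: twin_class_def twins_def)
qed (auto simp: twin_class_def twins_def)

lemma twins_cong:
  assumes symmetric: "\<forall>i<n. \<forall>j<n. B i j = B j i"
    and "x' < n" "y < n" "y' < n" "twins n B x x'" "twins n B y y'"
  shows "B x y = B x' y'"
proof -
  have "B x y = B x' y" using assms by (simp add: twins_def)
  also have "\<dots> = B y x'" using symmetric assms by simp
  also have "\<dots> = B y' x'" using assms by (simp add: twins_def)
  also have "\<dots> = B x' y'" using symmetric assms by simp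
  finally show ?thesis .
qed

lemma transpose_twins_in_Gamma:
  assumes symmetric: "\<forall>i<n. \<forall>j<n. B i j = B j i"
    and "x < n" "y < n" "twins n B x y" "a x = a y"
  shows "Transposition.transpose x y \<in> Gamma n a B"
proof -
  let ?\<tau> = "Transposition.transpose x y"
  have twin: "?\<tau> i < n \<and> twins n B (?\<tau> i) i" if "i < n" for i
    using assms that by (auto simp: Transposition.transpose_def twins_def)
  have "B (?\<tau> i) (?\<tau> j) = B i j" if "i < n" "j < n" for i j
    using twins_cong[OF symmetric] twin that by blast
  moreover have "?\<tau> permutes {0..<n}"
    using assms by (intro permutes_swap_id) auto
  ultimately show ?thesis
    using assms by (auto simp: Gamma_def Transposition.transpose_def)
qed

lemma Gamma_twins_iff:
  assumes \<gamma>: "\<gamma> \<in> Gamma n a B" and "x < n" "y < n"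
  shows "twins n B (\<gamma> x) (\<gamma> y) \<longleftrightarrow> twins n B x y"
proof -
  have onto: "\<gamma> ` {0..<n} = {0..<n}" and B: "\<forall>i<n. \<forall>j<n. B (\<gamma> i) (\<gamma> j) = B i j"
    using \<gamma> permutes_image by (auto simp: Gamma_def)
  have "twins n B (\<gamma> x) (\<gamma> y) \<longleftrightarrow> (\<forall>k\<in>\<gamma> ` {0..<n}. B (\<gamma> x) k = B (\<gamma> y) k)"
    unfolding onto twins_def by auto
  also have "\<dots> \<longleftrightarrow> twins n B x y"
    using B assms by (auto simp: twins_def)
  finally show ?thesis .
qed

lemma Gamma_image_twin_class:
  assumes \<gamma>: "\<gamma> \<in> Gamma n a B" and x: "x < n"
  shows "\<gamma> ` twin_class n B x = twin_class n B (\<gamma> x)"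
proof (intro set_eqI iffI)
  fix z assume "z \<in> \<gamma> ` twin_class n B x"
  then show "z \<in> twin_class n B (\<gamma> x)"
    using Gamma_twins_iff[OF \<gamma> x] Gamma_less[OF \<gamma>] by (auto simp: twin_class_def)
next
  fix z assume z: "z \<in> twin_class n B (\<gamma> x)"
  have "\<gamma> ` {0..<n} = {0..<n}"
    using \<gamma> permutes_image by (auto simp: Gamma_def)
  then obtain y where "y < n" "z = \<gamma> y"
    using z by (force simp: twin_class_def)
  then show "z \<in> \<gamma> ` twin_class n B x"
    using z Gamma_twins_iff[OF \<gamma> x] by (auto simp: twin_class_def)
qed

locale fibred_action =
  fixes n m :: nat and p :: "nat \<Rightarrow> nat" and G H :: "(nat \<Rightarrow> nat) set"
  assumes p_less: "\<And>x. x < n \<Longrightarrow> p x < m"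
    and p_onto: "\<And>i. i < m \<Longrightarrow> \<exists>x<n. p x = i"
    and descend: "\<And>g. g \<in> G \<Longrightarrow> \<exists>h\<in>H. \<forall>x<n. p (g x) = h (p x)"
    and lift: "\<And>h. h \<in> H \<Longrightarrow> \<exists>g\<in>G. \<forall>x<n. p (g x) = h (p x)"
    and fibre_transpose:
      "\<And>x y. x < n \<Longrightarrow> y < n \<Longrightarrow> p x = p y \<Longrightarrow> Transposition.transpose x y \<in> G"
    and G_comp: "\<And>g g'. g \<in> G \<Longrightarrow> g' \<in> G \<Longrightarrow> g \<circ> g' \<in> G"
    and G_less: "\<And>g x. g \<in> G \<Longrightarrow> x < n \<Longrightarrow> g x < n"
begin

lemma acts_transitively_iff: "acts_transitively n G \<longleftrightarrow> acts_transitively m H"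
proof
  assume G: "acts_transitively n G"
  show "acts_transitively m H" unfolding acts_transitively_def
  proof (intro allI impI)
    fix u v assume "u < m" "v < m"
    then obtain x y where xy: "x < n" "y < n" and "p x = u" "p y = v"
      using p_onto by blast
    moreover obtain g where "g \<in> G" "g x = y"
      using G xy unfolding acts_transitively_def by blast
    moreover obtain h where "h \<in> H" "\<forall>z<n. p (g z) = h (p z)"
      using descend[OF \<open>g \<in> G\<close>] by blast
    ultimately show "\<exists>h\<in>H. h u = v" by auto
  qed
next
  assume H: "acts_transitively m H"
  show "acts_transitively n G" unfolding acts_transitively_def
  proof (intro allI impI)
    fix x y assume xy: "x < n" "y < n"
    obtain h where "h \<in> H" "h (p x) = p y"
      using H xy p_less unfolding acts_transitively_def by blast
    moreover obtain g where g: "g \<in> G" "\<forall>z<n. p (g z) = h (p z)"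
      using lift[OF \<open>h \<in> H\<close>] by blast
    ultimately have "Transposition.transpose (g x) y \<in> G"
      using xy G_less fibre_transpose by simp
    then have "Transposition.transpose (g x) y \<circ> g \<in> G"
      using G_comp g(1) by blast
    moreover have "(Transposition.transpose (g x) y \<circ> g) x = y" by simp
    ultimately show "\<exists>g\<in>G. g x = y" by blast
  qed
qed

lemma acts_generously_transitively_iff:
  "acts_generously_transitively n G \<longleftrightarrow> acts_generously_transitively m H"
proof
  assume G: "acts_generously_transitively n G"
  show "acts_generously_transitively m H" unfolding acts_generously_transitively_def
  proof (intro allI impI)
    fix u v assume "u < m" "v < m"
    then obtain x y where xy: "x < n" "y < n" and "p x = u" "p y = v"
      using p_onto by blast
    obtain g where "g \<in> G" "g x = y" "g y = x"
      using G xy unfolding acts_generously_transitively_def by blast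
    moreover obtain h where "h \<in> H" "\<forall>z<n. p (g z) = h (p z)"
      using descend[OF \<open>g \<in> G\<close>] by blast
    ultimately show "\<exists>h\<in>H. h u = v \<and> h v = u"
      using xy \<open>p x = u\<close> \<open>p y = v\<close> by metis
  qed
next
  assume H: "acts_generously_transitively m H"
  show "acts_generously_transitively n G" unfolding acts_generously_transitively_def
  proof (intro allI impI)
    fix x y assume xy: "x < n" "y < n"
    show "\<exists>g\<in>G. g x = y \<and> g y = x"
    proof (cases "p x = p y")
      case True
      then have "Transposition.transpose x y \<in> G"
        using fibre_transpose xy by blast
      moreover have "Transposition.transpose x y x = y" "Transposition.transpose x y y = x"
        by simp_all
      ultimately show ?thesis by blast
    next
      case False
      obtain h where "h \<in> H" "h (p x) = p y" "h (p y) = p x"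
        using H xy p_less unfolding acts_generously_transitively_def by blast
      moreover obtain g where g: "g \<in> G" "\<forall>z<n. p (g z) = h (p z)"
        using lift[OF \<open>h \<in> H\<close>] by blast
      ultimately have gx: "g x < n" "p (g x) = p y" and gy: "g y < n" "p (g y) = p x"
        using xy G_less by auto
      txt \<open>\<open>g\<close> sends \<open>x, y\<close> into the fibres of \<open>y, x\<close>; two transpositions inside these
        (distinct) fibres move \<open>g x, g y\<close> back onto \<open>y, x\<close>.\<close>
      let ?\<sigma> = "Transposition.transpose (g y) x \<circ> (Transposition.transpose (g x) y \<circ> g)"
      have "?\<sigma> \<in> G"
        using gx gy xy fibre_transpose G_comp g(1) by simp
      moreover have "?\<sigma> x = y" "?\<sigma> y = x"
        using gx gy False by (auto simp: Transposition.transpose_def)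
      ultimately show ?thesis by blast
    qed
  qed
qed

end

locale twin_reduction =
  fixes n :: nat and B :: "nat \<Rightarrow> nat \<Rightarrow> 'a::semiring_char_0"
    and m :: nat and a' :: "nat \<Rightarrow> 'a" and B' :: "nat \<Rightarrow> nat \<Rightarrow> 'a"
    and C :: "nat \<Rightarrow> nat set" and r :: "nat \<Rightarrow> nat"
  assumes symmetric: "\<forall>i<n. \<forall>j<n. B i j = B j i"
    and bij_C: "bij_betw C {0..<m} (twin_classes n B)"
    and r_in_C: "\<And>i. i < m \<Longrightarrow> r i \<in> C i"
    and a'_eq: "\<And>i. i < m \<Longrightarrow> a' i = of_nat (card (C i))"
    and B'_eq: "\<And>i j. i < m \<Longrightarrow> j < m \<Longrightarrow> B' i j = B (r i) (r j)"
begin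

definition twin_index :: "nat \<Rightarrow> nat" where
  "twin_index x = inv_into {0..<m} C (twin_class n B x)"

lemma
  assumes i: "i < m"
  shows C_eq_twin_class: "C i = twin_class n B (r i)" and r_less: "r i < n"
proof -
  have "C i \<in> twin_classes n B"
    using bij_C i by (auto simp: bij_betw_def)
  then obtain z where z: "z < n" "C i = twin_class n B z"
    by (auto simp: twin_classes_def)
  moreover have "r i < n" "twins n B z (r i)"
    using r_in_C[OF i] z by (simp_all add: twin_class_def)
  ultimately show "r i < n" "C i = twin_class n B (r i)"
    by (simp_all add: twin_class_eq_iff)
qed

lemma finite_C: "i < m \<Longrightarrow> finite (C i)"
  unfolding C_eq_twin_class twin_class_def by (rule finite_Collect_conjI) simp

lemma twin_index_less: "x < n \<Longrightarrow> twin_index x < m"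
  and C_twin_index: "x < n \<Longrightarrow> C (twin_index x) = twin_class n B x"
proof -
  assume "x < n"
  then have "twin_class n B x \<in> C ` {0..<m}"
    using bij_C by (simp add: bij_betw_def twin_classes_def)
  from inv_into_into[OF this] f_inv_into_f[OF this]
  show "twin_index x < m" "C (twin_index x) = twin_class n B x"
    by (simp_all add: twin_index_def)
qed

lemma twin_index_eq_iff:
  assumes "x < n" "y < n"
  shows "twin_index x = twin_index y \<longleftrightarrow> twins n B x y"
proof -
  have "twin_index x = twin_index y \<longleftrightarrow> twin_class n B x = twin_class n B y"
    using C_twin_index assms unfolding twin_index_def by metis
  also have "\<dots> \<longleftrightarrow> twins n B x y"
    using assms by (simp add: twin_class_eq_iff)
  finally show ?thesis .
qed

lemma twin_index_r: "i < m \<Longrightarrow> twin_index (r i) = i"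
  using bij_C by (simp add: twin_index_def C_eq_twin_class[symmetric] bij_betw_def inv_into_f_f)

lemma twins_r_twin_index: "x < n \<Longrightarrow> twins n B (r (twin_index x)) x"
  using twin_index_eq_iff[of "r (twin_index x)" x] twin_index_r twin_index_less r_less by simp

lemma B_eq_B': "x < n \<Longrightarrow> y < n \<Longrightarrow> B x y = B' (twin_index x) (twin_index y)"
  using twins_cong[OF symmetric _ _ _ twins_r_twin_index twins_r_twin_index]
    twin_index_less r_less B'_eq by simp

lemma Gamma_descends:
  assumes g: "g \<in> Gamma n (\<lambda>_. 1) B"
  shows "\<exists>h\<in>Gamma m a' B'. \<forall>x<n. twin_index (g x) = h (twin_index x)"
proof -
  define h where "h i = (if i < m then twin_index (g (r i)) else i)" for i
  have h_less: "i < m \<Longrightarrow> h i < m" for i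
    using Gamma_less[OF g] twin_index_less r_less by (simp add: h_def)
  have twins_iff: "twin_index (g x) = twin_index (g y) \<longleftrightarrow> twin_index x = twin_index y"
    if "x < n" "y < n" for x y
    using that Gamma_less[OF g] Gamma_twins_iff[OF g] twin_index_eq_iff by simp
  have commute: "twin_index (g x) = h (twin_index x)" if "x < n" for x
    using twins_iff[OF that r_less] twin_index_r twin_index_less that
    by (simp add: h_def)
  have "inj_on h {0..<m}"
    using twins_iff r_less twin_index_r by (intro inj_onI) (auto simp: h_def)
  then have "h permutes {0..<m}"
    using h_less by (intro inj_imp_permutes) (auto simp: h_def)
  moreover have "a' (h i) = a' i" if i: "i < m" for i
  proof -
    have "C (h i) = g ` C i"
      using i Gamma_less[OF g] r_less C_twin_index C_eq_twin_class Gamma_image_twin_class[OF g]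
      by (simp add: h_def)
    moreover have "inj_on g (C i)"
      using g by (auto simp: Gamma_def intro: permutes_inj_on)
    ultimately show ?thesis
      using a'_eq i h_less by (simp add: card_image)
  qed
  moreover have "B' (h i) (h j) = B' i j" if "i < m" "j < m" for i j
    using that g r_less Gamma_less[OF g] B_eq_B' B'_eq
    by (simp add: h_def Gamma_def)
  ultimately show ?thesis
    using commute unfolding Gamma_def by blast
qed

lemma Gamma_lifts:
  assumes h: "h \<in> Gamma m a' B'"
  shows "\<exists>g\<in>Gamma n (\<lambda>_. 1) B. \<forall>x<n. twin_index (g x) = h (twin_index x)"
proof -
  have h_perm: "h permutes {0..<m}" and h_a': "\<And>i. i < m \<Longrightarrow> a' (h i) = a' i"
    and h_B': "\<And>i j. i < m \<Longrightarrow> j < m \<Longrightarrow> B' (h i) (h j) = B' i j"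
    using h by (auto simp: Gamma_def)
  have h_less: "i < m \<Longrightarrow> h i < m" for i
    using h_perm permutes_in_image by fastforce
  have "\<exists>f. bij_betw f (C i) (C (h i))" if i: "i < m" for i
  proof -
    txt \<open>The only use of characteristic zero: equal weights force equal class sizes.\<close>
    have "card (C i) = card (C (h i))"
      using a'_eq h_a' i h_less by (metis of_nat_eq_iff)
    then show ?thesis
      using finite_same_card_bij finite_C i h_less by blast
  qed
  then obtain f where f: "\<And>i. i < m \<Longrightarrow> bij_betw (f i) (C i) (C (h i))"
    by metis
  define g where "g x = (if x < n then f (twin_index x) x else x)" for x
  have in_own_C: "x \<in> C (twin_index x)" if "x < n" for x
    using that C_twin_index by (simp add: twin_class_def twins_def)
  have g_in_C: "g x \<in> C (h (twin_index x))" if "x < n" for x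
    using that f[OF twin_index_less] in_own_C by (auto simp: g_def bij_betw_def)
  have g_less: "g x < n" and commute: "twin_index (g x) = h (twin_index x)" if "x < n" for x
  proof -
    have i: "h (twin_index x) < m"
      using that h_less twin_index_less by blast
    then have "g x \<in> twin_class n B (r (h (twin_index x)))"
      using g_in_C[OF that] C_eq_twin_class by simp
    then have "g x < n" "twins n B (r (h (twin_index x))) (g x)"
      by (simp_all add: twin_class_def)
    then show "g x < n" and "twin_index (g x) = h (twin_index x)"
      using twin_index_eq_iff[OF r_less[OF i], of "g x"] twin_index_r[OF i] by auto
  qed
  have "inj_on g {0..<n}"
  proof (rule inj_onI)
    fix x y assume "x \<in> {0..<n}" "y \<in> {0..<n}" "g x = g y"
    then have xy: "x < n" "y < n" "g x = g y" by auto
    then have same: "twin_index x = twin_index y"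
      using commute permutes_inj[OF h_perm] by (metis injD)
    then have "f (twin_index x) x = f (twin_index x) y"
      using xy by (simp add: g_def)
    moreover have "x \<in> C (twin_index x)" "y \<in> C (twin_index x)"
      using in_own_C[OF xy(1)] in_own_C[OF xy(2)] by (simp_all add: same)
    ultimately show "x = y"
      using f[OF twin_index_less[OF xy(1)]] by (auto simp: bij_betw_def inj_on_def)
  qed
  then have "g permutes {0..<n}"
    using g_less by (intro inj_imp_permutes) (auto simp: g_def)
  moreover have "B (g x) (g y) = B x y" if "x < n" "y < n" for x y
    using that g_less commute B_eq_B' h_B' twin_index_less by simp
  ultimately show ?thesis
    using commute unfolding Gamma_def by blast
qed

sublocale fibred_action n m twin_index "Gamma n (\<lambda>_. 1) B" "Gamma m a' B'"
proof
  fix i assume "i < m"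
  then show "\<exists>x<n. twin_index x = i"
    using r_less twin_index_r by blast
next
  fix x y assume "x < n" "y < n" "twin_index x = twin_index y"
  then show "Transposition.transpose x y \<in> Gamma n (\<lambda>_. 1) B"
    using transpose_twins_in_Gamma[OF symmetric] twin_index_eq_iff by simp
qed (simp_all add: twin_index_less Gamma_descends Gamma_lifts Gamma_comp Gamma_less)

end

theorem lemma3p1:
  fixes B :: "nat \<Rightarrow> nat \<Rightarrow> 'a::field_char_0"
    and n m :: nat and a' :: "nat \<Rightarrow> 'a" and B' :: "nat \<Rightarrow> nat \<Rightarrow> 'a"
  assumes "n \<ge> 1"
    and "\<forall>i<n. \<forall>j<n. B i j = B j i"
    and "twin_reduced n B m a' B'"
  shows "(acts_transitively n (Gamma n (\<lambda>_. 1) B) \<longleftrightarrow> acts_transitively m (Gamma m a' B'))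
       \<and> (acts_generously_transitively n (Gamma n (\<lambda>_. 1) B)
            \<longleftrightarrow> acts_generously_transitively m (Gamma m a' B'))"
proof -
  obtain C r where "bij_betw C {0..<m} (twin_classes n B)" "\<forall>i<m. r i \<in> C i"
    "\<forall>i<m. a' i = of_nat (card (C i))" "\<forall>i<m. \<forall>j<m. B' i j = B (r i) (r j)"
    using assms(3) unfolding twin_reduced_def by blast
  then interpret twin_reduction n B m a' B' C r
    using assms(2) by unfold_locales auto
  show ?thesis
    using acts_transitively_iff acts_generously_transitively_iff by blast
qed

end
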